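(* Let $r(x)=e^{x^2/2}\int_x^\infty e^{-t^2/2}\,dt$ for $x\in\mathbb{R}$. Then: (a) On $(0,\infty)$, the function $x\mapsto x^\alpha r(x)$ is decreasing for $\alpha=0$, increasing for $\alpha=1$, and increasing then decreasing for $\alpha\in(0,1)$. (b) On $(0,\infty)$, the function $x\mapsto x^\alpha r'(x)$ is increasing for $\alpha=0$, decreasing for $\alpha=2$, and decreasing then increasing for $\alpha\in(0,2)$.
   Context: $r$ is Mill's ratio of the standard Gaussian law. *)

theory Defs
  imports "HOL-Analysis.Analysis"
begin

definition mills :: "real \<Rightarrow> real" where
  "mills x = exp (x\<^sup>2 / 2) * integral {x..} (\<lambda>t. exp (- (t\<^sup>2) / 2))"

end

theory Submission
  imports Defs "HOL-Real_Asymp.Real_Asymp"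
begin

text \<open>Since r' = x r - 1, the derivatives of x^a r(x) and x^a r'(x) on (0, oo) have the signs of
  r - x / (a + x^2) and of r - (a + x^2) / (x (1 + a + x^2)). For a comparison function v, the
  gap e^(-x^2/2) (r - v) tends to 0 at infinity, and its derivative e^(-x^2/2) (x v - 1 - v')
  no longer involves r. For the two comparison functions above it is an explicit rational function
  that changes sign at most once on (0, oo). Hence the gap is monotone there or unimodal, and its
  limit 0 at infinity together with its sign near 0 decides on which side of v the ratio r lies.\<close>

section \<open>Real functions: monotonicity and sign from derivatives\<close>

lemma strict_mono_on_if_deriv_pos:
  fixes f f' :: "real \<Rightarrow> real"
  assumes "convex S"
    and deriv: "\<And>x. x \<in> S \<Longrightarrow> (f has_real_derivative f' x) (at x)"
    and pos: "\<And>x. x \<in> interior S \<Longrightarrow> 0 < f' x"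
  shows "strict_mono_on S f"
proof (rule strict_mono_onI)
  fix x y assume "x \<in> S" "y \<in> S" "x < y"
  then have sub: "{x..y} \<subseteq> S"
    using \<open>convex S\<close> by (metis closed_segment_eq_real_ivl1 convex_contains_segment less_imp_le)
  then have "{x<..<y} \<subseteq> interior S"
    using interior_mono[OF sub] by simp
  show "f x < f y"
  proof (rule DERIV_pos_imp_increasing_open[OF \<open>x < y\<close>])
    show "continuous_on {x..y} f"
      using sub by (intro continuous_at_imp_continuous_on ballI DERIV_isCont[OF deriv]) auto
  next
    fix t assume "x < t" "t < y"
    then show "\<exists>d. (f has_real_derivative d) (at t) \<and> 0 < d"
      using sub \<open>{x<..<y} \<subseteq> interior S\<close> by (intro exI[of _ "f' t"] conjI deriv pos) auto
  qed
qed

lemma strict_antimono_on_if_deriv_neg: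
  fixes f f' :: "real \<Rightarrow> real"
  assumes "convex S"
    and "\<And>x. x \<in> S \<Longrightarrow> (f has_real_derivative f' x) (at x)"
    and "\<And>x. x \<in> interior S \<Longrightarrow> f' x < 0"
  shows "strict_antimono_on S f"
proof -
  have "strict_mono_on S (\<lambda>x. - f x)"
    by (rule strict_mono_on_if_deriv_pos[where f' = "\<lambda>x. - f' x"])
       (use assms in \<open>auto intro: derivative_eq_intros\<close>)
  then show ?thesis by (simp add: monotone_on_def)
qed

lemma strict_antimono_on_tendsto_0_imp_pos:
  fixes H :: "real \<Rightarrow> real"
  assumes dec: "strict_antimono_on {b..} H" and lim: "(H \<longlongrightarrow> 0) at_top" and "b \<le> x"
  shows "0 < H x"
proof -
  have "H t \<le> H (x + 1)" if "x + 1 \<le> t" for t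
    using monotone_onD[OF dec, of "x + 1" t] that \<open>b \<le> x\<close> by (cases "t = x + 1") auto
  then have "0 \<le> H (x + 1)"
    by (intro tendsto_upperbound[OF lim]) (auto simp: eventually_at_top_linorder)
  also have "H (x + 1) < H x"
    using monotone_onD[OF dec, of x "x + 1"] \<open>b \<le> x\<close> by simp
  finally show ?thesis .
qed

lemma strict_mono_on_tendsto_0_imp_neg:
  fixes H :: "real \<Rightarrow> real"
  assumes "strict_mono_on {b..} H" and "(H \<longlongrightarrow> 0) at_top" and "b \<le> x"
  shows "H x < 0"
proof -
  have "0 < - H x"
    using assms tendsto_minus[of H 0 at_top]
    by (intro strict_antimono_on_tendsto_0_imp_pos[where H = "\<lambda>x. - H x" and b = b])
       (auto simp: monotone_on_def)
  then show ?thesis by simp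
qed

lemma neg_then_pos_if_deriv_pos_then_neg:
  fixes H H' :: "real \<Rightarrow> real"
  assumes deriv: "\<And>x. a < x \<Longrightarrow> (H has_real_derivative H' x) (at x)"
    and pos: "\<And>x. a < x \<Longrightarrow> x < b \<Longrightarrow> 0 < H' x"
    and neg: "\<And>x. b < x \<Longrightarrow> H' x < 0"
    and "a < b" and lim: "(H \<longlongrightarrow> 0) at_top"
    and near: "\<forall>\<^sub>F x in at_right a. H x < 0"
  shows "\<exists>c>a. (\<forall>x. a < x \<and> x < c \<longrightarrow> H x < 0) \<and> (\<forall>x. c < x \<longrightarrow> 0 < H x)"
proof -
  have inc: "strict_mono_on {a<..b} H"
    by (rule strict_mono_on_if_deriv_pos[where f' = H']) (use deriv pos in auto)
  have dec: "strict_antimono_on {b..} H"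
    by (rule strict_antimono_on_if_deriv_neg[where f' = H']) (use deriv neg \<open>a < b\<close> in auto)
  have tail: "0 < H x" if "b \<le> x" for x
    using strict_antimono_on_tendsto_0_imp_pos[OF dec lim that] .
  obtain b' where "a < b'" and b': "\<And>y. a < y \<Longrightarrow> y < b' \<Longrightarrow> H y < 0"
    using near by (auto simp: eventually_at_right_field)
  define e where "e = (a + min b b') / 2"
  have e: "a < e" "e < b" "H e < 0"
    using \<open>a < b\<close> \<open>a < b'\<close> b' by (auto simp: e_def)
  have "continuous_on {e..b} H"
    using e by (intro continuous_at_imp_continuous_on ballI DERIV_isCont[OF deriv]) auto
  then obtain c where c: "e \<le> c" "c \<le> b" "H c = 0"
    using IVT'[of H e 0 b] e tail[of b] by auto
  show ?thesis
  proof (intro exI[of _ c] conjI allI impI)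
    show "a < c" using c e by simp
    fix x assume "a < x \<and> x < c"
    then show "H x < 0" using monotone_onD[OF inc, of x c] c by auto
  next
    fix x assume "c < x"
    show "0 < H x"
    proof (cases "x \<le> b")
      case True
      then show ?thesis using monotone_onD[OF inc, of c x] c e \<open>c < x\<close> by auto
    qed (use tail in auto)
  qed
qed

lemma less_sqrt_iff_mult_square_less:
  fixes p q x :: real
  assumes "0 < p" "0 \<le> x"
  shows "x < sqrt (q / p) \<longleftrightarrow> p * x\<^sup>2 < q"
proof -
  have "x < sqrt (q / p) \<longleftrightarrow> sqrt (x\<^sup>2) < sqrt (q / p)"
    using assms(2) by (simp only: real_sqrt_abs abs_of_nonneg)
  also have "\<dots> \<longleftrightarrow> p * x\<^sup>2 < q"
    using assms(1) unfolding real_sqrt_less_iff by (simp add: pos_less_divide_eq mult.commute)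
  finally show ?thesis .
qed

lemma sqrt_less_iff_less_mult_square:
  fixes p q x :: real
  assumes "0 < p" "0 \<le> x"
  shows "sqrt (q / p) < x \<longleftrightarrow> q < p * x\<^sup>2"
proof -
  have "sqrt (q / p) < x \<longleftrightarrow> sqrt (q / p) < sqrt (x\<^sup>2)"
    using assms(2) by (simp only: real_sqrt_abs abs_of_nonneg)
  also have "\<dots> \<longleftrightarrow> q < p * x\<^sup>2"
    using assms(1) unfolding real_sqrt_less_iff by (simp add: pos_divide_less_eq mult.commute)
  finally show ?thesis .
qed

section \<open>The Gaussian tail and the Mills ratio\<close>

definition gaussian_tail :: "real \<Rightarrow> real" where
  "gaussian_tail x = integral {x..} (\<lambda>t. exp (- (t\<^sup>2) / 2))"

lemma mills_eq_gaussian_tail: "mills x = exp (x\<^sup>2 / 2) * gaussian_tail x"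
  unfolding mills_def gaussian_tail_def ..

lemma gaussian_le_exp_linear: "exp (- (t\<^sup>2) / 2) \<le> exp (1/2) * exp (- 1 * t :: real)"
proof -
  have "- (t\<^sup>2) / 2 \<le> 1/2 + - 1 * t"
    using zero_le_power2[of "t - 1"] by (simp add: power2_eq_square algebra_simps)
  then show ?thesis by (simp flip: exp_add)
qed

lemma gaussian_integrable_atLeast: "(\<lambda>t. exp (- (t\<^sup>2) / 2)) integrable_on {a::real..}"
proof (rule integrable_on_all_intervals_integrable_bound)
  show "(\<lambda>t. exp (1/2) * exp (- 1 * t)) integrable_on {a..}"
    using integrable_on_exp_minus_to_infinity[of 1 a] by (intro integrable_on_mult_right) auto
  fix u v :: real
  have "{a..} \<inter> cbox u v = {max a u..v}" by auto
  then show "(\<lambda>t. if t \<in> {a..} then exp (- (t\<^sup>2) / 2) else 0) integrable_on cbox u v"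
    unfolding integrable_restrict_Int by (auto intro!: integrable_continuous_interval continuous_intros)
qed (use gaussian_le_exp_linear in auto)

lemma has_real_derivative_gaussian_tail:
  "(gaussian_tail has_real_derivative - exp (- (x\<^sup>2) / 2)) (at x)"
proof -
  let ?g = "\<lambda>t::real. exp (- (t\<^sup>2) / 2)"
  have split: "gaussian_tail y = integral {y..x + 1} ?g + gaussian_tail (x + 1)" if "y < x + 1" for y
  proof -
    have "{y..} = {y..x + 1} \<union> {x + 1..}" using that by auto
    moreover have "negligible ({y..x + 1} \<inter> {x + 1..})"
      by (rule negligible_subset[of "{x + 1}"]) auto
    moreover have "?g integrable_on {y..x + 1}"
      by (intro integrable_continuous_interval continuous_intros) auto
    ultimately show ?thesis
      unfolding gaussian_tail_def using integral_Un gaussian_integrable_atLeast by metis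
  qed
  have "((\<lambda>y. integral {y..x + 1} ?g) has_real_derivative - ?g x) (at x within {x - 1..x + 1})"
    by (intro integral_has_real_derivative' continuous_intros) auto
  then have "((\<lambda>y. integral {y..x + 1} ?g + gaussian_tail (x + 1)) has_real_derivative - ?g x) (at x)"
    using at_within_Icc_at[of "x - 1" x "x + 1"] by (auto intro!: derivative_eq_intros)
  then show ?thesis
    by (rule has_field_derivative_transform_within_open[where S = "{..<x + 1}"]) (auto simp: split)
qed

lemma gaussian_tail_tendsto_0: "(gaussian_tail \<longlongrightarrow> 0) at_top"
proof (rule tendsto_sandwich[of "\<lambda>_. 0" _ _ "\<lambda>x. exp (1/2) * exp (- 1 * x)"])
  show "\<forall>\<^sub>F x in at_top. 0 \<le> gaussian_tail x"
    unfolding gaussian_tail_def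
    by (intro always_eventually allI integral_nonneg gaussian_integrable_atLeast) auto
  have "gaussian_tail x \<le> exp (1/2) * exp (- 1 * x)" for x
  proof -
    have "gaussian_tail x \<le> integral {x..} (\<lambda>t. exp (1/2) * exp (- 1 * t))"
      unfolding gaussian_tail_def using integrable_on_exp_minus_to_infinity[of 1 x]
      by (intro integral_le gaussian_integrable_atLeast gaussian_le_exp_linear integrable_on_mult_right) auto
    also have "\<dots> = exp (1/2) * exp (- 1 * x)"
      using has_integral_exp_minus_to_infinity[of 1 x] by (simp add: integral_unique)
    finally show ?thesis .
  qed
  then show "\<forall>\<^sub>F x in at_top. gaussian_tail x \<le> exp (1/2) * exp (- 1 * x)"
    by simp
qed (real_asymp+)

lemma has_real_derivative_mills: "(mills has_real_derivative x * mills x - 1) (at x)"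
proof -
  have "((\<lambda>x. exp (x\<^sup>2 / 2)) has_real_derivative exp (x\<^sup>2 / 2) * x) (at x)"
    by (rule derivative_eq_intros refl | simp)+
  then have "(mills has_real_derivative
      exp (x\<^sup>2 / 2) * x * gaussian_tail x + - exp (- (x\<^sup>2) / 2) * exp (x\<^sup>2 / 2)) (at x)"
    unfolding mills_eq_gaussian_tail[abs_def] by (rule DERIV_mult[OF _ has_real_derivative_gaussian_tail])
  moreover have "exp (- (x\<^sup>2) / 2) * exp (x\<^sup>2 / 2) = 1"
    by (simp flip: exp_add)
  ultimately show ?thesis
    by (simp add: mills_eq_gaussian_tail algebra_simps)
qed

lemma deriv_mills: "deriv mills x = x * mills x - 1"
  using has_real_derivative_mills by (rule DERIV_imp_deriv)

lemma gaussian_tail_pos: "0 < gaussian_tail x"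
proof (rule strict_antimono_on_tendsto_0_imp_pos[OF _ gaussian_tail_tendsto_0])
  show "strict_antimono_on {x..} gaussian_tail"
    by (rule strict_antimono_on_if_deriv_neg[where f' = "\<lambda>t. - exp (- (t\<^sup>2) / 2)"])
       (simp, rule has_real_derivative_gaussian_tail, simp)
qed simp

lemma mills_pos: "0 < mills x"
  by (simp add: mills_eq_gaussian_tail gaussian_tail_pos)

section \<open>Comparing the Mills ratio with a function\<close>

definition mills_gap :: "(real \<Rightarrow> real) \<Rightarrow> real \<Rightarrow> real" where
  "mills_gap v x = exp (- (x\<^sup>2) / 2) * (mills x - v x)"

lemma mills_gap_neg_iff [simp]: "mills_gap v x < 0 \<longleftrightarrow> mills x < v x"
  by (simp add: mills_gap_def mult_less_0_iff)

lemma mills_gap_pos_iff [simp]: "0 < mills_gap v x \<longleftrightarrow> v x < mills x"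
  by (simp add: mills_gap_def zero_less_mult_iff)

lemma has_real_derivative_mills_gap:
  assumes "(v has_real_derivative v') (at x)"
  shows "(mills_gap v has_real_derivative exp (- (x\<^sup>2) / 2) * (x * v x - 1 - v')) (at x)"
  unfolding mills_gap_def[abs_def]
  by (auto intro!: derivative_eq_intros has_real_derivative_mills assms simp: algebra_simps)

lemma mills_gap_tendsto_0:
  assumes "((\<lambda>x. exp (- (x\<^sup>2) / 2) * v x) \<longlongrightarrow> 0) at_top"
  shows "(mills_gap v \<longlongrightarrow> 0) at_top"
proof -
  have "mills_gap v = (\<lambda>x. gaussian_tail x - exp (- (x\<^sup>2) / 2) * v x)"
    by (simp add: fun_eq_iff mills_gap_def mills_eq_gaussian_tail algebra_simps flip: exp_add)
  then show ?thesis
    using tendsto_diff[OF gaussian_tail_tendsto_0 assms] by simp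
qed

lemma mills_less_if_gap_deriv_pos:
  assumes "\<And>x. a < x \<Longrightarrow> (mills_gap v has_real_derivative D x) (at x)"
    and "\<And>x. a < x \<Longrightarrow> 0 < D x"
    and "((\<lambda>x. exp (- (x\<^sup>2) / 2) * v x) \<longlongrightarrow> 0) at_top"
    and "a < x"
  shows "mills x < v x"
proof -
  have "strict_mono_on {x..} (mills_gap v)"
    by (rule strict_mono_on_if_deriv_pos[where f' = D]) (use assms in auto)
  then have "mills_gap v x < 0"
    using strict_mono_on_tendsto_0_imp_neg mills_gap_tendsto_0[OF assms(3)] by blast
  then show ?thesis by simp
qed

lemma mills_greater_if_gap_deriv_neg:
  assumes "\<And>x. a < x \<Longrightarrow> (mills_gap v has_real_derivative D x) (at x)"
    and "\<And>x. a < x \<Longrightarrow> D x < 0"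
    and "((\<lambda>x. exp (- (x\<^sup>2) / 2) * v x) \<longlongrightarrow> 0) at_top"
    and "a < x"
  shows "v x < mills x"
proof -
  have "strict_antimono_on {x..} (mills_gap v)"
    by (rule strict_antimono_on_if_deriv_neg[where f' = D]) (use assms in auto)
  then have "0 < mills_gap v x"
    using strict_antimono_on_tendsto_0_imp_pos mills_gap_tendsto_0[OF assms(3)] by blast
  then show ?thesis by simp
qed

definition mills_threshold :: "real \<Rightarrow> real \<Rightarrow> real" where
  "mills_threshold a x = x / (a + x\<^sup>2)"

definition dmills_threshold :: "real \<Rightarrow> real \<Rightarrow> real" where
  "dmills_threshold a x = (a + x\<^sup>2) / (x * (1 + a + x\<^sup>2))"

lemma has_real_derivative_mills_gap_threshold:
  assumes "a + x\<^sup>2 \<noteq> 0"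
  shows "(mills_gap (mills_threshold a) has_real_derivative
           exp (- (x\<^sup>2) / 2) * (((1 - a) * x\<^sup>2 - a * (1 + a)) / (a + x\<^sup>2)\<^sup>2)) (at x)"
proof -
  have "(mills_threshold a has_real_derivative ((a + x\<^sup>2) - x * (2 * x)) / (a + x\<^sup>2)\<^sup>2) (at x)"
    unfolding mills_threshold_def[abs_def] using assms
    by (auto intro!: derivative_eq_intros simp: power2_eq_square)
  moreover have "x * mills_threshold a x - 1 - ((a + x\<^sup>2) - x * (2 * x)) / (a + x\<^sup>2)\<^sup>2
      = ((1 - a) * x\<^sup>2 - a * (1 + a)) / (a + x\<^sup>2)\<^sup>2"
  proof -
    have general: "x * (x / d) - 1 - (d - x * (2 * x)) / d\<^sup>2 = (x\<^sup>2 * d - d\<^sup>2 - d + 2 * x\<^sup>2) / d\<^sup>2"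
      if "d \<noteq> 0" for d
      using that by (simp add: field_simps power2_eq_square)
    have numerator: "x\<^sup>2 * (a + x\<^sup>2) - (a + x\<^sup>2)\<^sup>2 - (a + x\<^sup>2) + 2 * x\<^sup>2 = (1 - a) * x\<^sup>2 - a * (1 + a)"
      by (simp add: algebra_simps power2_eq_square)
    show ?thesis
      using general[OF assms] numerator unfolding mills_threshold_def by simp
  qed
  ultimately show ?thesis
    using has_real_derivative_mills_gap by metis
qed

lemma has_real_derivative_mills_gap_dthreshold:
  assumes "0 < x" "0 \<le> a"
  shows "(mills_gap (dmills_threshold a) has_real_derivative
           exp (- (x\<^sup>2) / 2) * ((a * (1 + a) - (2 - a) * x\<^sup>2) / (x\<^sup>2 * (1 + a + x\<^sup>2)\<^sup>2))) (at x)"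
proof -
  have "0 < 1 + a + x\<^sup>2"
    using assms by (simp add: add_nonneg_pos)
  then have nz: "x * (1 + a + x\<^sup>2) \<noteq> 0"
    using assms by simp
  have "(dmills_threshold a has_real_derivative
      (2 * x * (x * (1 + a + x\<^sup>2)) - (a + x\<^sup>2) * (1 + a + 3 * x\<^sup>2)) / (x * (1 + a + x\<^sup>2))\<^sup>2) (at x)"
    unfolding dmills_threshold_def[abs_def] using nz
    by (auto intro!: derivative_eq_intros simp: power2_eq_square algebra_simps)
  moreover have "x * dmills_threshold a x - 1
      - (2 * x * (x * (1 + a + x\<^sup>2)) - (a + x\<^sup>2) * (1 + a + 3 * x\<^sup>2)) / (x * (1 + a + x\<^sup>2))\<^sup>2
      = (a * (1 + a) - (2 - a) * x\<^sup>2) / (x\<^sup>2 * (1 + a + x\<^sup>2)\<^sup>2)"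
  proof -
    have general: "x * ((a + x\<^sup>2) / d) - 1 - (2 * x * d - (a + x\<^sup>2) * (1 + a + 3 * x\<^sup>2)) / d\<^sup>2
        = (x * (a + x\<^sup>2) * d - d\<^sup>2 - 2 * x * d + (a + x\<^sup>2) * (1 + a + 3 * x\<^sup>2)) / d\<^sup>2"
      if "d \<noteq> 0" for d
      using that by (simp add: field_simps power2_eq_square)
    have numerator: "x * (a + x\<^sup>2) * (x * (1 + a + x\<^sup>2)) - (x * (1 + a + x\<^sup>2))\<^sup>2
        - 2 * x * (x * (1 + a + x\<^sup>2)) + (a + x\<^sup>2) * (1 + a + 3 * x\<^sup>2) = a * (1 + a) - (2 - a) * x\<^sup>2"
      by (simp add: algebra_simps power2_eq_square)
    show ?thesis
      using general[OF nz] numerator unfolding dmills_threshold_def by (simp add: power_mult_distrib)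
  qed
  ultimately show ?thesis
    using has_real_derivative_mills_gap by metis
qed

lemma exp_mills_threshold_tendsto_0: "((\<lambda>x. exp (- (x\<^sup>2) / 2) * mills_threshold a x) \<longlongrightarrow> 0) at_top"
  unfolding mills_threshold_def by real_asymp

lemma exp_dmills_threshold_tendsto_0: "((\<lambda>x. exp (- (x\<^sup>2) / 2) * dmills_threshold a x) \<longlongrightarrow> 0) at_top"
  unfolding dmills_threshold_def by real_asymp

lemma mills_less_mills_threshold_0:
  assumes "0 < x"
  shows "mills x < mills_threshold 0 x"
proof (rule mills_less_if_gap_deriv_pos[OF _ _ exp_mills_threshold_tendsto_0 assms])
  fix t :: real assume "0 < t"
  then show "(mills_gap (mills_threshold 0) has_real_derivative
      exp (- (t\<^sup>2) / 2) * (((1 - 0) * t\<^sup>2 - 0 * (1 + 0)) / (0 + t\<^sup>2)\<^sup>2)) (at t)"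
    by (intro has_real_derivative_mills_gap_threshold) simp
  show "0 < exp (- (t\<^sup>2) / 2) * (((1 - 0) * t\<^sup>2 - 0 * (1 + 0)) / (0 + t\<^sup>2)\<^sup>2)"
    using \<open>0 < t\<close> by simp
qed

lemma mills_threshold_1_less_mills: "mills_threshold 1 x < mills x"
proof (rule mills_greater_if_gap_deriv_neg[OF _ _ exp_mills_threshold_tendsto_0, of "x - 1"])
  fix t :: real
  have "0 < 1 + t\<^sup>2"
    by (simp add: add_pos_nonneg)
  then show "(mills_gap (mills_threshold 1) has_real_derivative
      exp (- (t\<^sup>2) / 2) * (((1 - 1) * t\<^sup>2 - 1 * (1 + 1)) / (1 + t\<^sup>2)\<^sup>2)) (at t)"
    by (intro has_real_derivative_mills_gap_threshold) simp
  show "exp (- (t\<^sup>2) / 2) * (((1 - 1) * t\<^sup>2 - 1 * (1 + 1)) / (1 + t\<^sup>2)\<^sup>2) < 0"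
    using \<open>0 < 1 + t\<^sup>2\<close> by (simp add: mult_pos_neg)
qed simp

lemma dmills_threshold_0_less_mills:
  assumes "0 < x"
  shows "dmills_threshold 0 x < mills x"
proof -
  have "dmills_threshold 0 x = mills_threshold 1 x"
    using assms by (simp add: dmills_threshold_def mills_threshold_def power2_eq_square)
  then show ?thesis
    using mills_threshold_1_less_mills by simp
qed

lemma mills_less_dmills_threshold_2:
  assumes "0 < x"
  shows "mills x < dmills_threshold 2 x"
proof (rule mills_less_if_gap_deriv_pos[OF _ _ exp_dmills_threshold_tendsto_0 assms])
  fix t :: real assume "0 < t"
  then show "(mills_gap (dmills_threshold 2) has_real_derivative
      exp (- (t\<^sup>2) / 2) * ((2 * (1 + 2) - (2 - 2) * t\<^sup>2) / (t\<^sup>2 * (1 + 2 + t\<^sup>2)\<^sup>2))) (at t)"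
    by (intro has_real_derivative_mills_gap_dthreshold) simp_all
  have "0 < 3 + t\<^sup>2"
    by (simp add: add_pos_nonneg)
  then show "0 < exp (- (t\<^sup>2) / 2) * ((2 * (1 + 2) - (2 - 2) * t\<^sup>2) / (t\<^sup>2 * (1 + 2 + t\<^sup>2)\<^sup>2))"
    using \<open>0 < t\<close> by simp
qed

lemma eventually_mills_threshold_less_mills_at_right_0:
  assumes "0 < a"
  shows "\<forall>\<^sub>F x in at_right 0. mills_threshold a x < mills x"
proof -
  have "isCont (\<lambda>x. mills x - mills_threshold a x) 0"
    unfolding mills_threshold_def using assms DERIV_isCont[OF has_real_derivative_mills]
    by (intro continuous_intros) simp_all
  then have "((\<lambda>x. mills x - mills_threshold a x) \<longlongrightarrow> mills 0) (at_right 0)"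
    by (simp add: isCont_def filterlim_at_split mills_threshold_def)
  then have "\<forall>\<^sub>F x in at_right 0. 0 < mills x - mills_threshold a x"
    using mills_pos by (rule order_tendstoD(1))
  then show ?thesis
    by simp
qed

lemma eventually_mills_less_dmills_threshold_at_right_0:
  assumes "0 < a"
  shows "\<forall>\<^sub>F x in at_right 0. mills x < dmills_threshold a x"
proof -
  \<comment> \<open>The threshold blows up at 0, so compare after clearing its denominator.\<close>
  have "isCont (\<lambda>x. x * (1 + a + x\<^sup>2) * mills x - (a + x\<^sup>2)) 0"
    using DERIV_isCont[OF has_real_derivative_mills] by (intro continuous_intros)
  then have "((\<lambda>x. x * (1 + a + x\<^sup>2) * mills x - (a + x\<^sup>2)) \<longlongrightarrow> - a) (at_right 0)"
    by (simp add: isCont_def filterlim_at_split)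
  moreover have "- a < 0"
    using assms by simp
  ultimately have "\<forall>\<^sub>F x in at_right 0. x * (1 + a + x\<^sup>2) * mills x - (a + x\<^sup>2) < 0"
    by (rule order_tendstoD(2))
  then show ?thesis
    using eventually_at_right_less[of "0::real"]
  proof eventually_elim
    case (elim x)
    moreover have "0 < 1 + a + x\<^sup>2"
      using assms by (simp add: add_pos_nonneg)
    ultimately show ?case
      by (simp add: dmills_threshold_def pos_less_divide_eq mult.commute)
  qed
qed

lemma mills_threshold_crossing:
  assumes "0 < a" "a < 1"
  shows "\<exists>c>0. (\<forall>x. 0 < x \<and> x < c \<longrightarrow> mills_threshold a x < mills x)
              \<and> (\<forall>x. c < x \<longrightarrow> mills x < mills_threshold a x)"
proof -
  define D where "D x = exp (- (x\<^sup>2) / 2) * (((1 - a) * x\<^sup>2 - a * (1 + a)) / (a + x\<^sup>2)\<^sup>2)" for x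
  define b where "b = sqrt (a * (1 + a) / (1 - a))"
  have "0 < b"
    using assms by (simp add: b_def)
  have pos: "0 < a + x\<^sup>2" for x
    using assms by (simp add: add_pos_nonneg)
  have deriv: "(mills_gap (mills_threshold a) has_real_derivative D x) (at x)" for x
    unfolding D_def using pos[of x] by (intro has_real_derivative_mills_gap_threshold) simp
  have "D x < 0" if "0 < x" "x < b" for x
    unfolding D_def using pos[of x] that assms
    by (intro mult_pos_neg divide_neg_pos) (simp_all add: b_def less_sqrt_iff_mult_square_less)
  moreover have "0 < D x" if "b < x" for x
  proof -
    have "0 < x"
      using that \<open>0 < b\<close> by simp
    then show ?thesis
      unfolding D_def using pos[of x] that assms
      by (intro mult_pos_pos divide_pos_pos) (simp_all add: b_def sqrt_less_iff_less_mult_square)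
  qed
  moreover have "((\<lambda>x. - mills_gap (mills_threshold a) x) \<longlongrightarrow> 0) at_top"
    using tendsto_minus[OF mills_gap_tendsto_0[OF exp_mills_threshold_tendsto_0]] by simp
  moreover have "\<forall>\<^sub>F x in at_right 0. - mills_gap (mills_threshold a) x < 0"
    using eventually_mills_threshold_less_mills_at_right_0[OF assms(1)] by simp
  ultimately obtain c where "0 < c"
    and "\<forall>x. 0 < x \<and> x < c \<longrightarrow> - mills_gap (mills_threshold a) x < 0"
    and "\<forall>x. c < x \<longrightarrow> 0 < - mills_gap (mills_threshold a) x"
    using neg_then_pos_if_deriv_pos_then_neg[of 0 "\<lambda>x. - mills_gap (mills_threshold a) x" "\<lambda>x. - D x" b]
      deriv \<open>0 < b\<close> by (force intro: derivative_eq_intros)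
  then show ?thesis
    by (intro exI[of _ c]) simp
qed

lemma dmills_threshold_crossing:
  assumes "0 < a" "a < 2"
  shows "\<exists>c>0. (\<forall>x. 0 < x \<and> x < c \<longrightarrow> mills x < dmills_threshold a x)
              \<and> (\<forall>x. c < x \<longrightarrow> dmills_threshold a x < mills x)"
proof -
  define D where "D x = exp (- (x\<^sup>2) / 2) * ((a * (1 + a) - (2 - a) * x\<^sup>2) / (x\<^sup>2 * (1 + a + x\<^sup>2)\<^sup>2))" for x
  define b where "b = sqrt (a * (1 + a) / (2 - a))"
  have "0 < b"
    using assms by (simp add: b_def)
  have pos: "0 < 1 + a + x\<^sup>2" for x
    using assms by (simp add: add_pos_nonneg)
  have deriv: "(mills_gap (dmills_threshold a) has_real_derivative D x) (at x)" if "0 < x" for x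
    unfolding D_def using that assms by (intro has_real_derivative_mills_gap_dthreshold) simp_all
  have "0 < D x" if "0 < x" "x < b" for x
    unfolding D_def using pos[of x] that assms
    by (intro mult_pos_pos divide_pos_pos) (simp_all add: b_def less_sqrt_iff_mult_square_less)
  moreover have "D x < 0" if "b < x" for x
  proof -
    have "0 < x"
      using that \<open>0 < b\<close> by simp
    then show ?thesis
      unfolding D_def using pos[of x] that assms
      by (intro mult_pos_neg divide_neg_pos) (simp_all add: b_def sqrt_less_iff_less_mult_square)
  qed
  moreover have "(mills_gap (dmills_threshold a) \<longlongrightarrow> 0) at_top"
    using mills_gap_tendsto_0[OF exp_dmills_threshold_tendsto_0] .
  moreover have "\<forall>\<^sub>F x in at_right 0. mills_gap (dmills_threshold a) x < 0"
    using eventually_mills_less_dmills_threshold_at_right_0[OF assms(1)] by simp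
  ultimately obtain c where "0 < c"
    and "\<forall>x. 0 < x \<and> x < c \<longrightarrow> mills_gap (dmills_threshold a) x < 0"
    and "\<forall>x. c < x \<longrightarrow> 0 < mills_gap (dmills_threshold a) x"
    using neg_then_pos_if_deriv_pos_then_neg[of 0 "mills_gap (dmills_threshold a)" D b] deriv \<open>0 < b\<close>
    by blast
  then show ?thesis
    by (intro exI[of _ c]) simp
qed

section \<open>Monotonicity of x powr a times the Mills ratio and its derivative\<close>

lemma has_real_derivative_powr_mills:
  assumes "0 < x" "0 \<le> a"
  shows "((\<lambda>x. x powr a * mills x) has_real_derivative
           x powr (a - 1) * (a + x\<^sup>2) * (mills x - mills_threshold a x)) (at x)"
proof -
  have "0 < a + x\<^sup>2"
    using assms by (simp add: add_nonneg_pos)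
  then have "x powr (a - 1) * (a + x\<^sup>2) * (mills x - mills_threshold a x)
      = x powr (a - 1) * ((a + x\<^sup>2) * mills x - x)"
    by (simp add: mills_threshold_def right_diff_distrib)
  also have "\<dots> = x powr a * (x * mills x - 1) + a * x powr (a - 1) * mills x"
    using powr_mult_base[of x "a - 1", symmetric] assms by (simp add: algebra_simps power2_eq_square)
  finally show ?thesis
    using DERIV_mult'[OF has_real_derivative_powr[OF assms(1)] has_real_derivative_mills] by simp
qed

lemma has_real_derivative_powr_deriv_mills:
  assumes "0 < x" "0 \<le> a"
  shows "((\<lambda>x. x powr a * deriv mills x) has_real_derivative
           x powr (a - 1) * (x * (1 + a + x\<^sup>2)) * (mills x - dmills_threshold a x)) (at x)"
proof -
  have "0 < 1 + a + x\<^sup>2"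
    using assms by (simp add: add_nonneg_pos)
  then have "x powr (a - 1) * (x * (1 + a + x\<^sup>2)) * (mills x - dmills_threshold a x)
      = x powr (a - 1) * (x * (1 + a + x\<^sup>2) * mills x - (a + x\<^sup>2))"
    using assms by (simp add: dmills_threshold_def right_diff_distrib)
  also have "\<dots> = x powr a * (x * (x * mills x - 1) + mills x) + a * x powr (a - 1) * (x * mills x - 1)"
    using powr_mult_base[of x "a - 1", symmetric] assms by (simp add: algebra_simps power2_eq_square)
  finally have eq: "x powr (a - 1) * (x * (1 + a + x\<^sup>2)) * (mills x - dmills_threshold a x)
      = x powr a * (x * (x * mills x - 1) + mills x) + a * x powr (a - 1) * (x * mills x - 1)" .
  have "((\<lambda>x. x * mills x - 1) has_real_derivative x * (x * mills x - 1) + mills x) (at x)"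
    by (auto intro!: derivative_eq_intros has_real_derivative_mills)
  then show ?thesis
    using DERIV_mult'[OF has_real_derivative_powr[OF assms(1)]] eq by (simp add: deriv_mills)
qed

lemma powr_mills_strict_mono_on:
  assumes "0 \<le> a" "convex S" "S \<subseteq> {0<..}"
    and "\<And>x. x \<in> interior S \<Longrightarrow> mills_threshold a x < mills x"
  shows "strict_mono_on S (\<lambda>x. x powr a * mills x)"
proof (rule strict_mono_on_if_deriv_pos[OF \<open>convex S\<close> has_real_derivative_powr_mills])
  fix x assume "x \<in> interior S"
  moreover from this have "0 < x"
    using interior_subset assms(3) by blast
  ultimately show "0 < x powr (a - 1) * (a + x\<^sup>2) * (mills x - mills_threshold a x)"
    using assms by (simp add: add_nonneg_pos)
qed (use assms in auto)

lemma powr_mills_strict_antimono_on: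
  assumes "0 \<le> a" "convex S" "S \<subseteq> {0<..}"
    and "\<And>x. x \<in> interior S \<Longrightarrow> mills x < mills_threshold a x"
  shows "strict_antimono_on S (\<lambda>x. x powr a * mills x)"
proof (rule strict_antimono_on_if_deriv_neg[OF \<open>convex S\<close> has_real_derivative_powr_mills])
  fix x assume "x \<in> interior S"
  moreover from this have "0 < x"
    using interior_subset assms(3) by blast
  ultimately show "x powr (a - 1) * (a + x\<^sup>2) * (mills x - mills_threshold a x) < 0"
    using assms by (simp add: add_nonneg_pos mult_pos_neg)
qed (use assms in auto)

lemma powr_deriv_mills_strict_mono_on:
  assumes "0 \<le> a" "convex S" "S \<subseteq> {0<..}"
    and "\<And>x. x \<in> interior S \<Longrightarrow> dmills_threshold a x < mills x"
  shows "strict_mono_on S (\<lambda>x. x powr a * deriv mills x)"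
proof (rule strict_mono_on_if_deriv_pos[OF \<open>convex S\<close> has_real_derivative_powr_deriv_mills])
  fix x assume "x \<in> interior S"
  moreover from this have "0 < x"
    using interior_subset assms(3) by blast
  ultimately show "0 < x powr (a - 1) * (x * (1 + a + x\<^sup>2)) * (mills x - dmills_threshold a x)"
    using assms by (simp add: add_nonneg_pos)
qed (use assms in auto)

lemma powr_deriv_mills_strict_antimono_on:
  assumes "0 \<le> a" "convex S" "S \<subseteq> {0<..}"
    and "\<And>x. x \<in> interior S \<Longrightarrow> mills x < dmills_threshold a x"
  shows "strict_antimono_on S (\<lambda>x. x powr a * deriv mills x)"
proof (rule strict_antimono_on_if_deriv_neg[OF \<open>convex S\<close> has_real_derivative_powr_deriv_mills])
  fix x assume "x \<in> interior S"
  moreover from this have "0 < x"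
    using interior_subset assms(3) by blast
  ultimately show "x powr (a - 1) * (x * (1 + a + x\<^sup>2)) * (mills x - dmills_threshold a x) < 0"
    using assms by (simp add: add_nonneg_pos mult_pos_neg)
qed (use assms in auto)

theorem proposition9:
  shows "(strict_antimono_on {0<..} (\<lambda>x. x powr 0 * mills x)
        \<and> strict_mono_on {0<..} (\<lambda>x. x powr 1 * mills x)
        \<and> (\<forall>\<alpha>::real. 0 < \<alpha> \<and> \<alpha> < 1 \<longrightarrow>
             (\<exists>c>0. strict_mono_on {0<..c} (\<lambda>x. x powr \<alpha> * mills x)
                  \<and> strict_antimono_on {c..} (\<lambda>x. x powr \<alpha> * mills x))))
      \<and> (strict_mono_on {0<..} (\<lambda>x. x powr 0 * deriv mills x)
        \<and> strict_antimono_on {0<..} (\<lambda>x. x powr 2 * deriv mills x)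
        \<and> (\<forall>\<alpha>::real. 0 < \<alpha> \<and> \<alpha> < 2 \<longrightarrow>
             (\<exists>c>0. strict_antimono_on {0<..c} (\<lambda>x. x powr \<alpha> * deriv mills x)
                  \<and> strict_mono_on {c..} (\<lambda>x. x powr \<alpha> * deriv mills x))))"
proof -
  have int: "interior {0<..} = {0::real<..}"
    by (simp add: interior_open)
  have "strict_antimono_on {0<..} (\<lambda>x. x powr 0 * mills x)"
    by (rule powr_mills_strict_antimono_on) (auto simp: int mills_less_mills_threshold_0)
  moreover have "strict_mono_on {0<..} (\<lambda>x. x powr 1 * mills x)"
    by (rule powr_mills_strict_mono_on) (auto simp: mills_threshold_1_less_mills)
  moreover have "\<exists>c>0. strict_mono_on {0<..c} (\<lambda>x. x powr \<alpha> * mills x)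
                  \<and> strict_antimono_on {c..} (\<lambda>x. x powr \<alpha> * mills x)" if "0 < \<alpha> \<and> \<alpha> < 1" for \<alpha>
    using mills_threshold_crossing[of \<alpha>] that
    by (auto intro!: powr_mills_strict_mono_on powr_mills_strict_antimono_on)
  moreover have "strict_mono_on {0<..} (\<lambda>x. x powr 0 * deriv mills x)"
    by (rule powr_deriv_mills_strict_mono_on) (auto simp: int dmills_threshold_0_less_mills)
  moreover have "strict_antimono_on {0<..} (\<lambda>x. x powr 2 * deriv mills x)"
    by (rule powr_deriv_mills_strict_antimono_on) (auto simp: int mills_less_dmills_threshold_2)
  moreover have "\<exists>c>0. strict_antimono_on {0<..c} (\<lambda>x. x powr \<alpha> * deriv mills x)
                  \<and> strict_mono_on {c..} (\<lambda>x. x powr \<alpha> * deriv mills x)" if "0 < \<alpha> \<and> \<alpha> < 2" for \<alpha>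
    using dmills_threshold_crossing[of \<alpha>] that
    by (auto intro!: powr_deriv_mills_strict_mono_on powr_deriv_mills_strict_antimono_on)
  ultimately show ?thesis
    by blast
qed

end
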